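(* Let $q>0$ with $q(2s-1)<2s+1$, $\lambda>0$ and $f_1,f_2\in L^\infty(\Omega)$. Let $u,v\in X_0(\Omega)\cap\mathcal C\cap C_0(\overline\Omega)$ be the weak solutions of $u+\lambda L(u)=f_1$ and $v+\lambda L(v)=f_2$ in $\Omega$ (with $u=v=0$ in $\mathbb R^n\setminus\Omega$), where $L(w)=(-\Delta)^s w-w^{-q}$. Then $\|u-v\|_{L^\infty(\Omega)}\le\|f_1-f_2\|_{L^\infty(\Omega)}$.
   Context: $s\in(0,1)$, $n>2s$, $\Omega\subset\mathbb R^n$ bounded with $C^2$ boundary, $\delta(x)=\mathrm{dist}(x,\partial\Omega)$, $C_0(\overline\Omega)=\{u\in C(\overline\Omega):u=0\text{ on }\partial\Omega\}$. $(-\Delta)^s u(x)=2C_n^s\,\mathrm{P.V.}\int_{\mathbb R^n}\frac{u(x)-u(y)}{|x-y|^{n+2s}}dy$, $C_n^s=\pi^{-n/2}2^{2s-1}s\,\Gamma(\frac{n+2s}{2})/\Gamma(1-s)$; $Q=\mathbb R^{2n}\setminus((\mathbb R^n\setminus\Omega)^2)$; $X_0(\Omega)$ is the Hilbert space of measurable $u$ on $\mathbb R^n$ vanishing a.e. outside $\Omega$, $u\in L^2(\Omega)$, $\|u\|_{X_0}^2=C_n^s\int_Q\frac{|u(x)-u(y)|^2}{|x-y|^{n+2s}}<\infty$. Fix $r>\mathrm{diam}\,\Omega$; $\mathcal C$ is the set of $v\in L^\infty(\Omega)$ with constants $k_1,k_2>0$ such that $k_1\delta^s\le v\le k_2\delta^s$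 if $q<1$; $k_1\delta^s(\ln(r/\delta^s))^{1/2}\le v\le k_2\delta^s(\ln(r/\delta^s))^{1/2}$ if $q=1$; $k_1\delta^{2s/(q+1)}\le v\le k_2\delta^{2s/(q+1)}$ if $q>1$. Weak solution of $u+\lambda L(u)=f$: $u\in X_0(\Omega)$, $\operatorname{ess\,inf}_Ku>0$ on compacts $K\subset\Omega$, and $\int_\Omega u\phi+\lambda(C_n^s\int_Q\frac{(u(x)-u(y))(\phi(x)-\phi(y))}{|x-y|^{n+2s}}-\int_\Omega u^{-q}\phi)=\int_\Omega f\phi$ for all $\phi\in X_0(\Omega)$. *)

theory Defs
  imports "HOL-Analysis.Analysis"
begin

text \<open>Dimension n is DIM('a) for an abstract Euclidean space 'a.\<close>

definition C2_on :: "'a::euclidean_space set \<Rightarrow> ('a \<Rightarrow> real) \<Rightarrow> bool" where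
  "C2_on S f \<longleftrightarrow> (\<exists>G :: 'a \<Rightarrow> 'a. \<exists>H :: 'a \<Rightarrow> ('a \<Rightarrow>\<^sub>L 'a).
      (\<forall>x\<in>S. (f has_derivative (\<lambda>h. G x \<bullet> h)) (at x)) \<and>
      (\<forall>x\<in>S. (G has_derivative blinfun_apply (H x)) (at x)) \<and>
      continuous_on S H)"

definition C2_boundary :: "'a::euclidean_space set \<Rightarrow> bool" where
  "C2_boundary \<Omega> \<longleftrightarrow> (\<exists>U \<rho>. open U \<and> frontier \<Omega> \<subseteq> U \<and> C2_on U \<rho> \<and>
      \<Omega> \<inter> U = {x\<in>U. \<rho> x < 0} \<and>
      (\<forall>x\<in>frontier \<Omega>. \<rho> x = 0 \<and> \<not> (\<rho> has_derivative (\<lambda>h. 0)) (at x)))"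

definition dist_bd :: "'a::euclidean_space set \<Rightarrow> 'a \<Rightarrow> real" where
  "dist_bd \<Omega> x = infdist x (frontier \<Omega>)"

definition frac_const :: "nat \<Rightarrow> real \<Rightarrow> real" where
  "frac_const n s = pi powr (- real n / 2) * 2 powr (2 * s - 1) * s
      * Gamma ((real n + 2 * s) / 2) / Gamma (1 - s)"

definition Qset :: "'a set \<Rightarrow> ('a \<times> 'a) set" where
  "Qset \<Omega> = UNIV - (-\<Omega>) \<times> (-\<Omega>)"

definition X0 :: "real \<Rightarrow> 'a::euclidean_space set \<Rightarrow> ('a \<Rightarrow> real) set" where
  "X0 s \<Omega> = {u. u \<in> borel_measurable lebesgue \<and>
      (AE x in lebesgue. x \<notin> \<Omega> \<longrightarrow> u x = 0) \<and>
      (\<integral>\<^sup>+ x. indicator \<Omega> x * ennreal ((u x)\<^sup>2) \<partial>lebesgue) < \<infinity> \<and>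
      (\<integral>\<^sup>+ z. indicator (Qset \<Omega>) z *
          ennreal ((u (fst z) - u (snd z))\<^sup>2 / norm (fst z - snd z) powr (real DIM('a) + 2 * s))
         \<partial>(lebesgue \<Otimes>\<^sub>M lebesgue)) < \<infinity>}"

definition Linf :: "'a::euclidean_space set \<Rightarrow> ('a \<Rightarrow> real) set" where
  "Linf \<Omega> = {u. u \<in> borel_measurable lebesgue \<and>
      (\<exists>C. AE x in lebesgue. x \<in> \<Omega> \<longrightarrow> \<bar>u x\<bar> \<le> C)}"

definition Linf_norm :: "'a::euclidean_space set \<Rightarrow> ('a \<Rightarrow> real) \<Rightarrow> real" where
  "Linf_norm \<Omega> u = Inf {C. 0 \<le> C \<and> (AE x in lebesgue. x \<in> \<Omega> \<longrightarrow> \<bar>u x\<bar> \<le> C)}"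

definition C0_closure :: "'a::euclidean_space set \<Rightarrow> ('a \<Rightarrow> real) set" where
  "C0_closure \<Omega> = {u. continuous_on (closure \<Omega>) u \<and> (\<forall>x\<in>frontier \<Omega>. u x = 0)}"

text \<open>The class \<C> (depends on s, q and the fixed r > diam \<Omega>).\<close>
definition profile :: "real \<Rightarrow> real \<Rightarrow> real \<Rightarrow> real \<Rightarrow> real" where
  "profile s q r d =
     (if q < 1 then d powr s
      else if q = 1 then d powr s * sqrt (ln (r / d powr s))
      else d powr (2 * s / (q + 1)))"

definition classC :: "real \<Rightarrow> real \<Rightarrow> real \<Rightarrow> 'a::euclidean_space set \<Rightarrow> ('a \<Rightarrow> real) set" where
  "classC s q r \<Omega> = {v. v \<in> Linf \<Omega> \<and> (\<exists>k1 k2. k1 > 0 \<and> k2 > 0 \<and>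
      (AE x in lebesgue. x \<in> \<Omega> \<longrightarrow>
         k1 * profile s q r (dist_bd \<Omega> x) \<le> v x \<and> v x \<le> k2 * profile s q r (dist_bd \<Omega> x)))}"

text \<open>Weak solution of u + \<lambda>((-\<Delta>)^s u - u^{-q}) = f.  The singular term is required to be
  integrable against every test function so that the weak formulation is meaningful.\<close>
definition weak_solution :: "real \<Rightarrow> real \<Rightarrow> real \<Rightarrow> 'a::euclidean_space set \<Rightarrow> ('a \<Rightarrow> real)
    \<Rightarrow> ('a \<Rightarrow> real) \<Rightarrow> bool" where
  "weak_solution s q lam \<Omega> f u \<longleftrightarrow> u \<in> X0 s \<Omega> \<and>
     (\<forall>K. compact K \<and> K \<subseteq> \<Omega> \<longrightarrow> (\<exists>c>0. AE x in lebesgue. x \<in> K \<longrightarrow> c \<le> u x)) \<and>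
     (\<forall>\<phi> \<in> X0 s \<Omega>.
        set_integrable lebesgue \<Omega> (\<lambda>x. u x powr (-q) * \<phi> x) \<and>
        (LINT x:\<Omega>|lebesgue. u x * \<phi> x)
        + lam * (frac_const DIM('a) s *
              (LINT z:Qset \<Omega>|(lebesgue \<Otimes>\<^sub>M lebesgue).
                 (u (fst z) - u (snd z)) * (\<phi> (fst z) - \<phi> (snd z))
                 / norm (fst z - snd z) powr (real DIM('a) + 2 * s))
            - (LINT x:\<Omega>|lebesgue. u x powr (-q) * \<phi> x))
        = (LINT x:\<Omega>|lebesgue. f x * \<phi> x))"

end

theory Submission
  imports Defs
begin

text \<open>
  Let $C \<ge> 0$ bound $f_1 - f_2$ a.e.\ and test the difference of the two weak formulations with
  $W = (u - v - C)^+ \in X_0(\Omega)$. Since $(u - v - C) W = W^2$, this gives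
  $\int W^2 = \int (f_1 - f_2 - C) W - \lambda C_n^s \mathcal{E}(u - v, W) + \lambda \int (u^{-q} - v^{-q}) W$,
  where $\mathcal{E}$ is the Gagliardo form. All three terms on the right are nonpositive: the first by the
  choice of $C$, the second because $W$ is a nondecreasing function of $u - v$, and the third because
  $t \mapsto t^{-q}$ is decreasing and $W$ vanishes where $u \le v$. Hence $u - v \le C$ a.e., and
  exchanging $u$ and $v$ bounds $|u - v|$ by $C$.
\<close>

lemma square_diff_le_twice_sum_squares: "(a - b)\<^sup>2 \<le> 2 * a\<^sup>2 + 2 * (b::real)\<^sup>2"
proof -
  have "2 * a\<^sup>2 + 2 * b\<^sup>2 - (a - b)\<^sup>2 = (a + b)\<^sup>2"
    by (simp add: power2_eq_square algebra_simps)
  then show ?thesis by (metis diff_ge_0_iff_ge zero_le_power2)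
qed

lemma abs_mult_le_sum_squares: "\<bar>a * b\<bar> \<le> a\<^sup>2 + (b::real)\<^sup>2"
proof -
  have "2 * \<bar>a\<bar> * \<bar>b\<bar> \<le> a\<^sup>2 + b\<^sup>2"
    using sum_squares_bound[of "\<bar>a\<bar>" "\<bar>b\<bar>"] by simp
  moreover have "0 \<le> \<bar>a\<bar> * \<bar>b\<bar>" by simp
  ultimately show ?thesis unfolding abs_mult by linarith
qed

lemma mono_diff_mult_nonneg:
  fixes g :: "real \<Rightarrow> real"
  assumes "mono g"
  shows "0 \<le> (a - b) * (g a - g b)"
proof (cases "a \<le> b")
  case True
  then show ?thesis using monoD[OF assms True] by (intro mult_nonpos_nonpos) auto
next
  case False
  then show ?thesis using monoD[OF assms, of b a] by (intro mult_nonneg_nonneg) auto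
qed

lemma powr_neg_mult_pos_part_le:
  fixes a b C q :: real
  assumes "0 < b" "0 \<le> C" "0 < q"
  shows "a powr (-q) * max 0 (a - b - C) \<le> b powr (-q) * max 0 (a - b - C)"
proof (cases "a - b - C \<le> 0")
  case False
  with assms have "a powr (-q) \<le> b powr (-q)"
    by (intro powr_mono2') auto
  then show ?thesis by (intro mult_right_mono) auto
qed simp

lemma set_integrable_iff_nn_integral:
  fixes f :: "'a \<Rightarrow> real"
  assumes "A \<in> sets M" "f \<in> borel_measurable M" "\<And>x. 0 \<le> f x"
  shows "set_integrable M A f \<longleftrightarrow> (\<integral>\<^sup>+x. indicator A x * ennreal (f x) \<partial>M) < \<infinity>"
proof -
  have "(\<lambda>x. indicat_real A x *\<^sub>R f x) \<in> borel_measurable M"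
    using assms(1,2) by measurable
  moreover have "(\<integral>\<^sup>+x. ennreal (norm (indicat_real A x *\<^sub>R f x)) \<partial>M)
      = (\<integral>\<^sup>+x. indicator A x * ennreal (f x) \<partial>M)"
    using assms(3) by (intro nn_integral_cong) (auto split: split_indicator)
  ultimately show ?thesis
    unfolding set_integrable_def integrable_iff_bounded by auto
qed

lemma AE_zero_if_set_integral_square_nonpos:
  fixes w :: "'a \<Rightarrow> real"
  assumes "set_integrable M A (\<lambda>x. (w x)\<^sup>2)" "(LINT x:A|M. (w x)\<^sup>2) \<le> 0"
  shows "AE x in M. x \<in> A \<longrightarrow> w x = 0"
proof -
  have nonneg: "AE x in M. 0 \<le> indicator A x *\<^sub>R (w x)\<^sup>2"
    by (intro AE_I2) (simp add: indicator_def)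
  then have "0 \<le> (LINT x:A|M. (w x)\<^sup>2)"
    unfolding set_lebesgue_integral_def by (rule integral_nonneg_AE)
  with assms(2) have "(LINT x:A|M. (w x)\<^sup>2) = 0"
    by linarith
  then have "AE x in M. indicator A x *\<^sub>R (w x)\<^sup>2 = 0"
    using integral_nonneg_eq_0_iff_AE[OF assms(1)[unfolded set_integrable_def] nonneg]
    unfolding set_lebesgue_integral_def by simp
  then show ?thesis
    by (auto elim: eventually_mono)
qed

lemma set_integral_mult_pos_part:
  fixes w :: "'a \<Rightarrow> real"
  assumes "set_integrable M A (\<lambda>x. w x * max 0 (w x - C))" "set_integrable M A (\<lambda>x. C * max 0 (w x - C))"
  shows "(LINT x:A|M. w x * max 0 (w x - C)) - (LINT x:A|M. C * max 0 (w x - C))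
       = (LINT x:A|M. (max 0 (w x - C))\<^sup>2)"
proof -
  have "(LINT x:A|M. w x * max 0 (w x - C)) - (LINT x:A|M. C * max 0 (w x - C))
      = (LINT x:A|M. w x * max 0 (w x - C) - C * max 0 (w x - C))"
    by (rule set_integral_diff(2)[symmetric, OF assms])
  also have "\<dots> = (LINT x:A|M. (max 0 (w x - C))\<^sup>2)"
  proof -
    have "w x * max 0 (w x - C) - C * max 0 (w x - C) = (max 0 (w x - C))\<^sup>2" for x
      by (simp add: max_def power2_eq_square algebra_simps)
    then show ?thesis by simp
  qed
  finally show ?thesis .
qed

lemma AE_pos_if_pos_on_compacts:
  fixes v :: "'a::euclidean_space \<Rightarrow> real"
  assumes "open \<Omega>"
    and "\<And>K. compact K \<Longrightarrow> K \<subseteq> \<Omega> \<Longrightarrow> \<exists>c>0. AE x in lebesgue. x \<in> K \<longrightarrow> c \<le> v x"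
  shows "AE x in lebesgue. x \<in> \<Omega> \<longrightarrow> 0 < v x"
proof -
  obtain K :: "nat \<Rightarrow> 'a set" where K: "\<And>n. compact (K n)" "\<And>n. K n \<subseteq> \<Omega>" "\<Union> (range K) = \<Omega>"
    using open_Union_compact_subsets[OF assms(1)] by metis
  obtain c where "\<And>n. c n > 0 \<and> (AE x in lebesgue. x \<in> K n \<longrightarrow> c n \<le> v x)"
    using assms(2)[OF K(1,2)] by metis
  then have "AE x in lebesgue. \<forall>n. x \<in> K n \<longrightarrow> 0 < v x"
    unfolding AE_all_countable by (fastforce elim: eventually_mono)
  then show ?thesis
    using K(3) by (auto elim: eventually_mono)
qed

lemma measurable_fst_lebesgue [measurable]:
  "(fst :: 'a::euclidean_space \<times> 'a \<Rightarrow> 'a) \<in> borel_measurable (lebesgue \<Otimes>\<^sub>M lebesgue)"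
  by (rule measurable_compose[OF measurable_fst]) (simp add: measurable_completion)

lemma measurable_snd_lebesgue [measurable]:
  "(snd :: 'a::euclidean_space \<times> 'a \<Rightarrow> 'a) \<in> borel_measurable (lebesgue \<Otimes>\<^sub>M lebesgue)"
  by (rule measurable_compose[OF measurable_snd]) (simp add: measurable_completion)

lemma sets_Qset: "\<Omega> \<in> sets lebesgue \<Longrightarrow> Qset \<Omega> \<in> sets (lebesgue \<Otimes>\<^sub>M lebesgue)"
proof -
  assume "\<Omega> \<in> sets lebesgue"
  then have "- \<Omega> \<in> sets lebesgue"
    using sets.compl_sets[of \<Omega> lebesgue] by (simp add: Compl_eq_Diff_UNIV)
  then have "(- \<Omega>) \<times> (- \<Omega>) \<in> sets (lebesgue \<Otimes>\<^sub>M lebesgue)"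
    by (intro pair_measureI)
  then show ?thesis
    unfolding Qset_def using sets.compl_sets[of _ "lebesgue \<Otimes>\<^sub>M lebesgue"]
    by (simp add: space_pair_measure)
qed

section \<open>The energy space\<close>

abbreviation frac_kernel :: "real \<Rightarrow> 'a::euclidean_space \<times> 'a \<Rightarrow> real" where
  "frac_kernel s z \<equiv> norm (fst z - snd z) powr (real DIM('a) + 2 * s)"

lemma X0_borel_measurable: "u \<in> X0 s \<Omega> \<Longrightarrow> u \<in> borel_measurable lebesgue"
  by (simp add: X0_def)

lemma X0_iff_set_integrable:
  fixes \<Omega> :: "'a::euclidean_space set"
  assumes "\<Omega> \<in> sets lebesgue"
  shows "u \<in> X0 s \<Omega> \<longleftrightarrow> u \<in> borel_measurable lebesgue \<and> (AE x in lebesgue. x \<notin> \<Omega> \<longrightarrow> u x = 0)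
     \<and> set_integrable lebesgue \<Omega> (\<lambda>x. (u x)\<^sup>2)
     \<and> set_integrable (lebesgue \<Otimes>\<^sub>M lebesgue) (Qset \<Omega>) (\<lambda>z. (u (fst z) - u (snd z))\<^sup>2 / frac_kernel s z)"
proof (cases "u \<in> borel_measurable lebesgue")
  case True
  note [measurable] = True
  have "set_integrable lebesgue \<Omega> (\<lambda>x. (u x)\<^sup>2)
      \<longleftrightarrow> (\<integral>\<^sup>+x. indicator \<Omega> x * ennreal ((u x)\<^sup>2) \<partial>lebesgue) < \<infinity>"
    using assms by (intro set_integrable_iff_nn_integral) auto
  moreover have "set_integrable (lebesgue \<Otimes>\<^sub>M lebesgue) (Qset \<Omega>) (\<lambda>z. (u (fst z) - u (snd z))\<^sup>2 / frac_kernel s z)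
      \<longleftrightarrow> (\<integral>\<^sup>+z. indicator (Qset \<Omega>) z * ennreal ((u (fst z) - u (snd z))\<^sup>2 / frac_kernel s z)
             \<partial>(lebesgue \<Otimes>\<^sub>M lebesgue)) < \<infinity>"
    using sets_Qset[OF assms] by (intro set_integrable_iff_nn_integral) auto
  ultimately show ?thesis
    using True unfolding X0_def by simp
qed (simp add: X0_def)

lemma X0_set_integrable_square:
  fixes \<Omega> :: "'a::euclidean_space set"
  shows "u \<in> X0 s \<Omega> \<Longrightarrow> \<Omega> \<in> sets lebesgue \<Longrightarrow> set_integrable lebesgue \<Omega> (\<lambda>x. (u x)\<^sup>2)"
  using X0_iff_set_integrable by blast

lemma X0_set_integrable_gagliardo:
  fixes \<Omega> :: "'a::euclidean_space set"
  shows "u \<in> X0 s \<Omega> \<Longrightarrow> \<Omega> \<in> sets lebesgue \<Longrightarrow>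
    set_integrable (lebesgue \<Otimes>\<^sub>M lebesgue) (Qset \<Omega>) (\<lambda>z. (u (fst z) - u (snd z))\<^sup>2 / frac_kernel s z)"
  using X0_iff_set_integrable by blast

lemma X0_normal_contraction:
  fixes \<Omega> :: "'a::euclidean_space set"
  assumes "w \<in> X0 s \<Omega>" "\<Omega> \<in> sets lebesgue" "W \<in> borel_measurable lebesgue"
    and "\<And>x. \<bar>W x\<bar> \<le> \<bar>w x\<bar>" "\<And>x y. \<bar>W x - W y\<bar> \<le> \<bar>w x - w y\<bar>"
  shows "W \<in> X0 s \<Omega>"
proof -
  note [measurable] = assms(2,3) sets_Qset[OF assms(2)]
  have "AE x in lebesgue. x \<notin> \<Omega> \<longrightarrow> w x = 0"
    using assms(1) by (simp add: X0_def)
  then have "AE x in lebesgue. x \<notin> \<Omega> \<longrightarrow> W x = 0"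
  proof eventually_elim
    case (elim x)
    then show ?case using assms(4)[of x] by auto
  qed
  moreover have "set_integrable lebesgue \<Omega> (\<lambda>x. (W x)\<^sup>2)"
    by (rule set_integrable_bound[OF X0_set_integrable_square[OF assms(1,2)]])
      (unfold set_borel_measurable_def, measurable, simp add: abs_le_square_iff[symmetric] assms(4))
  moreover have "set_integrable (lebesgue \<Otimes>\<^sub>M lebesgue) (Qset \<Omega>)
      (\<lambda>z. (W (fst z) - W (snd z))\<^sup>2 / frac_kernel s z)"
    by (rule set_integrable_bound[OF X0_set_integrable_gagliardo[OF assms(1,2)]])
      (unfold set_borel_measurable_def, measurable,
       auto simp: abs_le_square_iff[symmetric] assms(5) intro!: AE_I2 divide_right_mono)
  ultimately show ?thesis
    using assms(2,3) by (simp add: X0_iff_set_integrable)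
qed

lemma X0_diff:
  fixes \<Omega> :: "'a::euclidean_space set"
  assumes "u \<in> X0 s \<Omega>" "v \<in> X0 s \<Omega>" "\<Omega> \<in> sets lebesgue"
  shows "(\<lambda>x. u x - v x) \<in> X0 s \<Omega>"
proof -
  note [measurable] = assms(3) sets_Qset[OF assms(3)] X0_borel_measurable[OF assms(1)] X0_borel_measurable[OF assms(2)]
  have "AE x in lebesgue. x \<notin> \<Omega> \<longrightarrow> u x - v x = 0"
    using assms(1,2) unfolding X0_def by (auto elim: eventually_rev_mp)
  moreover have "set_integrable lebesgue \<Omega> (\<lambda>x. (u x - v x)\<^sup>2)"
    by (rule set_integrable_bound[where f="\<lambda>x. 2 * (u x)\<^sup>2 + 2 * (v x)\<^sup>2"])
      (use X0_set_integrable_square[OF assms(1,3)] X0_set_integrable_square[OF assms(2,3)] in simp,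
       unfold set_borel_measurable_def, measurable,
       simp add: square_diff_le_twice_sum_squares)
  moreover have "set_integrable (lebesgue \<Otimes>\<^sub>M lebesgue) (Qset \<Omega>)
      (\<lambda>z. (u (fst z) - v (fst z) - (u (snd z) - v (snd z)))\<^sup>2 / frac_kernel s z)"
  proof (rule set_integrable_bound[where f="\<lambda>z. 2 * ((u (fst z) - u (snd z))\<^sup>2 / frac_kernel s z)
                                            + 2 * ((v (fst z) - v (snd z))\<^sup>2 / frac_kernel s z)"])
    show "set_integrable (lebesgue \<Otimes>\<^sub>M lebesgue) (Qset \<Omega>) (\<lambda>z. 2 * ((u (fst z) - u (snd z))\<^sup>2 / frac_kernel s z)
        + 2 * ((v (fst z) - v (snd z))\<^sup>2 / frac_kernel s z))"
      using X0_set_integrable_gagliardo[OF assms(1,3)] X0_set_integrable_gagliardo[OF assms(2,3)]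
      by (intro set_integral_add(1) set_integrable_mult_right)
    show "set_borel_measurable (lebesgue \<Otimes>\<^sub>M lebesgue) (Qset \<Omega>)
        (\<lambda>z. (u (fst z) - v (fst z) - (u (snd z) - v (snd z)))\<^sup>2 / frac_kernel s z)"
      unfolding set_borel_measurable_def by measurable
    have "\<bar>(u a - v a - (u b - v b))\<^sup>2 / k\<bar> \<le> \<bar>2 * ((u a - u b)\<^sup>2 / k) + 2 * ((v a - v b)\<^sup>2 / k)\<bar>"
      if "0 \<le> k" for a b and k :: real
    proof -
      have "(u a - v a - (u b - v b))\<^sup>2 / k \<le> 2 * ((u a - u b)\<^sup>2 / k) + 2 * ((v a - v b)\<^sup>2 / k)"
        using divide_right_mono[OF square_diff_le_twice_sum_squares[of "u a - u b" "v a - v b"] that]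
        by (simp add: add_divide_distrib algebra_simps)
      then show ?thesis using that by simp
    qed
    then show "AE z in lebesgue \<Otimes>\<^sub>M lebesgue. z \<in> Qset \<Omega> \<longrightarrow>
        norm ((u (fst z) - v (fst z) - (u (snd z) - v (snd z)))\<^sup>2 / frac_kernel s z)
        \<le> norm (2 * ((u (fst z) - u (snd z))\<^sup>2 / frac_kernel s z) + 2 * ((v (fst z) - v (snd z))\<^sup>2 / frac_kernel s z))"
      by (intro AE_I2) simp
  qed
  ultimately show ?thesis
    using assms(3) by (simp add: X0_iff_set_integrable)
qed

lemma X0_pos_part_diff:
  fixes \<Omega> :: "'a::euclidean_space set"
  assumes "u \<in> X0 s \<Omega>" "v \<in> X0 s \<Omega>" "\<Omega> \<in> sets lebesgue" "0 \<le> C"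
  shows "(\<lambda>x. max 0 (u x - v x - C)) \<in> X0 s \<Omega>"
proof (rule X0_normal_contraction[OF X0_diff[OF assms(1-3)] assms(3)])
  show "(\<lambda>x. max 0 (u x - v x - C)) \<in> borel_measurable lebesgue"
    using X0_borel_measurable[OF assms(1)] X0_borel_measurable[OF assms(2)] by measurable
qed (use assms(4) in \<open>auto simp: max_def abs_if\<close>)

lemma X0_set_integrable_mult:
  fixes \<Omega> :: "'a::euclidean_space set"
  assumes "u \<in> X0 s \<Omega>" "w \<in> X0 s \<Omega>" "\<Omega> \<in> sets lebesgue"
  shows "set_integrable lebesgue \<Omega> (\<lambda>x. u x * w x)"
proof -
  note [measurable] = assms(3) X0_borel_measurable[OF assms(1)] X0_borel_measurable[OF assms(2)]
  show ?thesis
    by (rule set_integrable_bound[where f="\<lambda>x. (u x)\<^sup>2 + (w x)\<^sup>2"])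
      (use X0_set_integrable_square[OF assms(1,3)] X0_set_integrable_square[OF assms(2,3)] in simp,
       unfold set_borel_measurable_def, measurable,
       simp add: abs_mult_le_sum_squares)
qed

lemma X0_set_integrable_gagliardo_mult:
  fixes \<Omega> :: "'a::euclidean_space set"
  assumes "u \<in> X0 s \<Omega>" "w \<in> X0 s \<Omega>" "\<Omega> \<in> sets lebesgue"
  shows "set_integrable (lebesgue \<Otimes>\<^sub>M lebesgue) (Qset \<Omega>)
           (\<lambda>z. (u (fst z) - u (snd z)) * (w (fst z) - w (snd z)) / frac_kernel s z)"
proof (rule set_integrable_bound[where f="\<lambda>z. (u (fst z) - u (snd z))\<^sup>2 / frac_kernel s z
                                           + (w (fst z) - w (snd z))\<^sup>2 / frac_kernel s z"])
  note [measurable] = sets_Qset[OF assms(3)] X0_borel_measurable[OF assms(1)] X0_borel_measurable[OF assms(2)]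
  show "set_integrable (lebesgue \<Otimes>\<^sub>M lebesgue) (Qset \<Omega>) (\<lambda>z. (u (fst z) - u (snd z))\<^sup>2 / frac_kernel s z
      + (w (fst z) - w (snd z))\<^sup>2 / frac_kernel s z)"
    using X0_set_integrable_gagliardo[OF assms(1,3)] X0_set_integrable_gagliardo[OF assms(2,3)]
    by (rule set_integral_add(1))
  show "set_borel_measurable (lebesgue \<Otimes>\<^sub>M lebesgue) (Qset \<Omega>)
      (\<lambda>z. (u (fst z) - u (snd z)) * (w (fst z) - w (snd z)) / frac_kernel s z)"
    unfolding set_borel_measurable_def by measurable
  have bound: "norm (a * b / k) \<le> norm (a\<^sup>2 / k + b\<^sup>2 / k)" if "0 \<le> k" for a b k :: real
    using divide_right_mono[OF abs_mult_le_sum_squares[of a b] that] that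
    by (simp add: add_divide_distrib abs_div_pos)
  show "AE z in lebesgue \<Otimes>\<^sub>M lebesgue. z \<in> Qset \<Omega> \<longrightarrow>
      norm ((u (fst z) - u (snd z)) * (w (fst z) - w (snd z)) / frac_kernel s z)
      \<le> norm ((u (fst z) - u (snd z))\<^sup>2 / frac_kernel s z + (w (fst z) - w (snd z))\<^sup>2 / frac_kernel s z)"
    by (intro AE_I2 impI bound) simp
qed

lemma Linf_const: "(\<lambda>_. c) \<in> Linf \<Omega>"
  unfolding Linf_def by auto

lemma Linf_diff: "f \<in> Linf \<Omega> \<Longrightarrow> g \<in> Linf \<Omega> \<Longrightarrow> (\<lambda>x. f x - g x) \<in> Linf \<Omega>"
proof -
  assume "f \<in> Linf \<Omega>" "g \<in> Linf \<Omega>"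
  then obtain B1 B2 where [measurable]: "f \<in> borel_measurable lebesgue" "g \<in> borel_measurable lebesgue"
    and B1: "AE x in lebesgue. x \<in> \<Omega> \<longrightarrow> \<bar>f x\<bar> \<le> B1"
    and B2: "AE x in lebesgue. x \<in> \<Omega> \<longrightarrow> \<bar>g x\<bar> \<le> B2"
    unfolding Linf_def by blast
  from B1 B2 have "AE x in lebesgue. x \<in> \<Omega> \<longrightarrow> \<bar>f x - g x\<bar> \<le> B1 + B2"
    by eventually_elim auto
  then show ?thesis
    unfolding Linf_def by auto
qed

lemma Linf_set_integrable_mult_X0:
  fixes \<Omega> :: "'a::euclidean_space set"
  assumes "f \<in> Linf \<Omega>" "w \<in> X0 s \<Omega>" "\<Omega> \<in> sets lebesgue" "emeasure lebesgue \<Omega> < \<infinity>"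
  shows "set_integrable lebesgue \<Omega> (\<lambda>x. f x * w x)"
proof -
  obtain B where [measurable]: "f \<in> borel_measurable lebesgue"
    and B: "AE x in lebesgue. x \<in> \<Omega> \<longrightarrow> \<bar>f x\<bar> \<le> B"
    using assms(1) unfolding Linf_def by auto
  note [measurable] = assms(3) X0_borel_measurable[OF assms(2)]
  have "set_integrable lebesgue \<Omega> (\<lambda>_. 1::real)"
    using assms(3,4) by (simp add: set_integrable_def integrable_indicator_iff)
  then have "set_integrable lebesgue \<Omega> (\<lambda>x. \<bar>B\<bar> * (1 + (w x)\<^sup>2))"
    using X0_set_integrable_square[OF assms(2,3)] by (intro set_integrable_mult_right set_integral_add(1))
  moreover have "set_borel_measurable lebesgue \<Omega> (\<lambda>x. f x * w x)"
    unfolding set_borel_measurable_def by measurable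
  moreover have "AE x in lebesgue. x \<in> \<Omega> \<longrightarrow> norm (f x * w x) \<le> norm (\<bar>B\<bar> * (1 + (w x)\<^sup>2))"
    using B
  proof eventually_elim
    case (elim x)
    show ?case
    proof
      assume "x \<in> \<Omega>"
      then have "\<bar>f x\<bar> * \<bar>w x\<bar> \<le> \<bar>B\<bar> * (1 + (w x)\<^sup>2)"
        using elim abs_mult_le_sum_squares[of 1 "w x"] by (intro mult_mono) auto
      then show "norm (f x * w x) \<le> norm (\<bar>B\<bar> * (1 + (w x)\<^sup>2))"
        by (simp add: abs_mult)
    qed
  qed
  ultimately show ?thesis
    by (rule set_integrable_bound)
qed

lemma Linf_norm_le_by_bounds:
  assumes "g \<in> Linf \<Omega>"
    and "\<And>C. 0 \<le> C \<Longrightarrow> AE x in lebesgue. x \<in> \<Omega> \<longrightarrow> \<bar>g x\<bar> \<le> C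
           \<Longrightarrow> AE x in lebesgue. x \<in> \<Omega> \<longrightarrow> \<bar>h x\<bar> \<le> C"
  shows "Linf_norm \<Omega> h \<le> Linf_norm \<Omega> g"
  unfolding Linf_norm_def
proof (rule cInf_mono)
  obtain B where "AE x in lebesgue. x \<in> \<Omega> \<longrightarrow> \<bar>g x\<bar> \<le> B"
    using assms(1) unfolding Linf_def by blast
  then have "AE x in lebesgue. x \<in> \<Omega> \<longrightarrow> \<bar>g x\<bar> \<le> max 0 B"
    by (auto elim: eventually_mono)
  then show "{C. 0 \<le> C \<and> (AE x in lebesgue. x \<in> \<Omega> \<longrightarrow> \<bar>g x\<bar> \<le> C)} \<noteq> {}"
    by force
  show "bdd_below {C. 0 \<le> C \<and> (AE x in lebesgue. x \<in> \<Omega> \<longrightarrow> \<bar>h x\<bar> \<le> C)}"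
    by (rule bdd_belowI[where m=0]) blast
qed (use assms(2) in blast)

section \<open>The fractional Dirichlet form and weak solutions\<close>

text \<open>$C_n^s$ times this form is the pairing of $(-\Delta)^s u$ with $\varphi$ in the weak formulation.\<close>
definition gagliardo_form :: "real \<Rightarrow> 'a::euclidean_space set \<Rightarrow> ('a \<Rightarrow> real) \<Rightarrow> ('a \<Rightarrow> real) \<Rightarrow> real"
  where "gagliardo_form s \<Omega> u \<phi> = (LINT z:Qset \<Omega>|(lebesgue \<Otimes>\<^sub>M lebesgue).
           (u (fst z) - u (snd z)) * (\<phi> (fst z) - \<phi> (snd z)) / frac_kernel s z)"

lemma frac_const_nonneg: "0 < s \<Longrightarrow> s < 1 \<Longrightarrow> 0 \<le> frac_const n s"
  unfolding frac_const_def
  by (intro mult_nonneg_nonneg divide_nonneg_pos less_imp_le[OF Gamma_real_pos]) auto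

lemma gagliardo_form_diff:
  fixes \<Omega> :: "'a::euclidean_space set"
  assumes "u \<in> X0 s \<Omega>" "v \<in> X0 s \<Omega>" "\<phi> \<in> X0 s \<Omega>" "\<Omega> \<in> sets lebesgue"
  shows "gagliardo_form s \<Omega> u \<phi> - gagliardo_form s \<Omega> v \<phi> = gagliardo_form s \<Omega> (\<lambda>x. u x - v x) \<phi>"
proof -
  have pointwise: "(a - b) * p / k - (c - d) * p / k = (a - c - (b - d)) * p / k" for a b c d p k :: real
  proof -
    have "(a - b) * p / k - (c - d) * p / k = ((a - b) - (c - d)) * p / k"
      by (simp only: left_diff_distrib diff_divide_distrib)
    also have "\<dots> = (a - c - (b - d)) * p / k"
      by simp
    finally show ?thesis .
  qed
  have "gagliardo_form s \<Omega> u \<phi> - gagliardo_form s \<Omega> v \<phi>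
      = (LINT z:Qset \<Omega>|(lebesgue \<Otimes>\<^sub>M lebesgue).
           (u (fst z) - u (snd z)) * (\<phi> (fst z) - \<phi> (snd z)) / frac_kernel s z
           - (v (fst z) - v (snd z)) * (\<phi> (fst z) - \<phi> (snd z)) / frac_kernel s z)"
    unfolding gagliardo_form_def
    by (rule set_integral_diff(2)[symmetric, OF X0_set_integrable_gagliardo_mult[OF assms(1,3,4)]
                                              X0_set_integrable_gagliardo_mult[OF assms(2,3,4)]])
  also have "\<dots> = gagliardo_form s \<Omega> (\<lambda>x. u x - v x) \<phi>"
    unfolding gagliardo_form_def pointwise ..
  finally show ?thesis .
qed

lemma gagliardo_form_mono_comp_nonneg:
  assumes "mono g"
  shows "0 \<le> gagliardo_form s \<Omega> w (\<lambda>x. g (w x))"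
  unfolding gagliardo_form_def set_lebesgue_integral_def
  using mono_diff_mult_nonneg[OF assms] by (intro Bochner_Integration.integral_nonneg) (simp add: indicator_def)

lemma weak_solution_testD:
  fixes \<Omega> :: "'a::euclidean_space set"
  assumes "weak_solution s q lam \<Omega> f u" "\<phi> \<in> X0 s \<Omega>"
  shows "set_integrable lebesgue \<Omega> (\<lambda>x. u x powr (-q) * \<phi> x)"
    and "(LINT x:\<Omega>|lebesgue. u x * \<phi> x)
           + lam * (frac_const DIM('a) s * gagliardo_form s \<Omega> u \<phi> - (LINT x:\<Omega>|lebesgue. u x powr (-q) * \<phi> x))
         = (LINT x:\<Omega>|lebesgue. f x * \<phi> x)"
  using assms unfolding weak_solution_def gagliardo_form_def by blast+

lemma weak_solutions_diff_tested:
  fixes \<Omega> :: "'a::euclidean_space set"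
  assumes "\<Omega> \<in> sets lebesgue" "emeasure lebesgue \<Omega> < \<infinity>" "f1 \<in> Linf \<Omega>" "f2 \<in> Linf \<Omega>"
    and "weak_solution s q lam \<Omega> f1 u" "weak_solution s q lam \<Omega> f2 v" "\<phi> \<in> X0 s \<Omega>"
  shows "(LINT x:\<Omega>|lebesgue. (u x - v x) * \<phi> x)
       = (LINT x:\<Omega>|lebesgue. (f1 x - f2 x) * \<phi> x)
         - lam * (frac_const DIM('a) s * gagliardo_form s \<Omega> (\<lambda>x. u x - v x) \<phi>)
         + lam * ((LINT x:\<Omega>|lebesgue. u x powr (-q) * \<phi> x) - (LINT x:\<Omega>|lebesgue. v x powr (-q) * \<phi> x))"
proof -
  let ?c = "frac_const DIM('a) s"
  let ?Pu = "LINT x:\<Omega>|lebesgue. u x powr (-q) * \<phi> x"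
  let ?Pv = "LINT x:\<Omega>|lebesgue. v x powr (-q) * \<phi> x"
  have uX: "u \<in> X0 s \<Omega>" and vX: "v \<in> X0 s \<Omega>"
    using assms(5,6) unfolding weak_solution_def by auto
  have "(LINT x:\<Omega>|lebesgue. (u x - v x) * \<phi> x)
      = (LINT x:\<Omega>|lebesgue. u x * \<phi> x) - (LINT x:\<Omega>|lebesgue. v x * \<phi> x)"
    unfolding left_diff_distrib
    by (rule set_integral_diff(2)[OF X0_set_integrable_mult[OF uX assms(7,1)] X0_set_integrable_mult[OF vX assms(7,1)]])
  moreover have "(LINT x:\<Omega>|lebesgue. (f1 x - f2 x) * \<phi> x)
      = (LINT x:\<Omega>|lebesgue. f1 x * \<phi> x) - (LINT x:\<Omega>|lebesgue. f2 x * \<phi> x)"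
    unfolding left_diff_distrib
    by (rule set_integral_diff(2)[OF Linf_set_integrable_mult_X0[OF assms(3,7,1,2)]
                                     Linf_set_integrable_mult_X0[OF assms(4,7,1,2)]])
  moreover have "lam * (?c * gagliardo_form s \<Omega> (\<lambda>x. u x - v x) \<phi>)
      = lam * (?c * gagliardo_form s \<Omega> u \<phi> - ?Pu) - lam * (?c * gagliardo_form s \<Omega> v \<phi> - ?Pv) + lam * (?Pu - ?Pv)"
    unfolding gagliardo_form_diff[OF uX vX assms(7,1), symmetric] by (simp add: algebra_simps)
  ultimately show ?thesis
    using weak_solution_testD(2)[OF assms(5,7)] weak_solution_testD(2)[OF assms(6,7)] by linarith
qed

lemma weak_solution_comparison:
  fixes \<Omega> :: "'a::euclidean_space set"
  assumes "0 < s" "s < 1" "0 < q" "0 \<le> lam" "open \<Omega>" "bounded \<Omega>"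
    and "f1 \<in> Linf \<Omega>" "f2 \<in> Linf \<Omega>"
    and "weak_solution s q lam \<Omega> f1 u" "weak_solution s q lam \<Omega> f2 v"
    and "0 \<le> C" "AE x in lebesgue. x \<in> \<Omega> \<longrightarrow> f1 x - f2 x \<le> C"
  shows "AE x in lebesgue. x \<in> \<Omega> \<longrightarrow> u x - v x \<le> C"
proof -
  have \<Omega>: "\<Omega> \<in> sets lebesgue" "emeasure lebesgue \<Omega> < \<infinity>"
    using assms(5,6) emeasure_bounded_finite by (auto intro: sets_completionI_sets)
  have uX: "u \<in> X0 s \<Omega>" and vX: "v \<in> X0 s \<Omega>"
    using assms(9,10) unfolding weak_solution_def by auto
  define W where "W x = max 0 (u x - v x - C)" for x
  have WX: "W \<in> X0 s \<Omega>"
    unfolding W_def by (rule X0_pos_part_diff[OF uX vX \<Omega>(1) assms(11)])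
  have "mono (\<lambda>t. max 0 (t - C))"
    by (rule monoI) simp
  then have "0 \<le> gagliardo_form s \<Omega> (\<lambda>x. u x - v x) W"
    unfolding W_def by (rule gagliardo_form_mono_comp_nonneg)
  then have form: "0 \<le> lam * (frac_const DIM('a) s * gagliardo_form s \<Omega> (\<lambda>x. u x - v x) W)"
    using assms(1,2,4) frac_const_nonneg by simp
  have "AE x in lebesgue. x \<in> \<Omega> \<longrightarrow> 0 < v x"
    using AE_pos_if_pos_on_compacts[OF assms(5)] assms(10) unfolding weak_solution_def by blast
  then have "AE x in lebesgue. x \<in> \<Omega> \<longrightarrow> u x powr (-q) * W x \<le> v x powr (-q) * W x"
    unfolding W_def by eventually_elim (use assms(3,11) powr_neg_mult_pos_part_le in blast)
  then have "(LINT x:\<Omega>|lebesgue. u x powr (-q) * W x) \<le> (LINT x:\<Omega>|lebesgue. v x powr (-q) * W x)"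
    using weak_solution_testD(1)[OF assms(9) WX] weak_solution_testD(1)[OF assms(10) WX]
    by (intro set_integral_mono_AE) auto
  then have singular: "lam * ((LINT x:\<Omega>|lebesgue. u x powr (-q) * W x)
      - (LINT x:\<Omega>|lebesgue. v x powr (-q) * W x)) \<le> 0"
    using assms(4) by (simp add: mult_nonneg_nonpos)
  have "AE x in lebesgue. x \<in> \<Omega> \<longrightarrow> (f1 x - f2 x) * W x \<le> C * W x"
    using assms(12) by eventually_elim (auto simp: W_def intro: mult_right_mono)
  then have forcing: "(LINT x:\<Omega>|lebesgue. (f1 x - f2 x) * W x) \<le> (LINT x:\<Omega>|lebesgue. C * W x)"
    using Linf_set_integrable_mult_X0[OF Linf_diff[OF assms(7,8)] WX \<Omega>]
      Linf_set_integrable_mult_X0[OF Linf_const WX \<Omega>]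
    by (intro set_integral_mono_AE) auto
  have "(LINT x:\<Omega>|lebesgue. (W x)\<^sup>2)
      = (LINT x:\<Omega>|lebesgue. (u x - v x) * W x) - (LINT x:\<Omega>|lebesgue. C * W x)"
    using set_integral_mult_pos_part[of lebesgue \<Omega> "\<lambda>x. u x - v x" C]
      X0_set_integrable_mult[OF X0_diff[OF uX vX \<Omega>(1)] WX \<Omega>(1)]
      Linf_set_integrable_mult_X0[OF Linf_const WX \<Omega>]
    unfolding W_def by simp
  then have "(LINT x:\<Omega>|lebesgue. (W x)\<^sup>2) \<le> 0"
    using weak_solutions_diff_tested[OF \<Omega> assms(7-10) WX] form singular forcing by linarith
  then have "AE x in lebesgue. x \<in> \<Omega> \<longrightarrow> W x = 0"
    by (rule AE_zero_if_set_integral_square_nonpos[OF X0_set_integrable_square[OF WX \<Omega>(1)]])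
  then show ?thesis
    by eventually_elim (auto simp: W_def)
qed

theorem mainTheorem6:
  fixes \<Omega> :: "'a::euclidean_space set" and s q lam r :: real
    and f1 f2 u v :: "'a \<Rightarrow> real"
  assumes "0 < s" "s < 1" "real DIM('a) > 2 * s"
    and "open \<Omega>" "bounded \<Omega>" "C2_boundary \<Omega>"
    and "r > diameter \<Omega>"
    and "q > 0" "q * (2 * s - 1) < 2 * s + 1" "lam > 0"
    and "f1 \<in> Linf \<Omega>" "f2 \<in> Linf \<Omega>"
    and "u \<in> X0 s \<Omega> \<inter> classC s q r \<Omega> \<inter> C0_closure \<Omega>"
    and "v \<in> X0 s \<Omega> \<inter> classC s q r \<Omega> \<inter> C0_closure \<Omega>"
    and "weak_solution s q lam \<Omega> f1 u" "weak_solution s q lam \<Omega> f2 v"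
  shows "Linf_norm \<Omega> (\<lambda>x. u x - v x) \<le> Linf_norm \<Omega> (\<lambda>x. f1 x - f2 x)"
proof (rule Linf_norm_le_by_bounds[OF Linf_diff[OF assms(11,12)]])
  fix C :: real
  assume "0 \<le> C" and bound: "AE x in lebesgue. x \<in> \<Omega> \<longrightarrow> \<bar>f1 x - f2 x\<bar> \<le> C"
  have "AE x in lebesgue. x \<in> \<Omega> \<longrightarrow> f1 x - f2 x \<le> C"
    and "AE x in lebesgue. x \<in> \<Omega> \<longrightarrow> f2 x - f1 x \<le> C"
    using bound by (auto elim: eventually_mono)
  then have "AE x in lebesgue. x \<in> \<Omega> \<longrightarrow> u x - v x \<le> C"
    and "AE x in lebesgue. x \<in> \<Omega> \<longrightarrow> v x - u x \<le> C"
    using weak_solution_comparison[OF assms(1,2,8) less_imp_le[OF assms(10)] assms(4,5)] assms(11,12,15,16)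
      \<open>0 \<le> C\<close> by blast+
  then show "AE x in lebesgue. x \<in> \<Omega> \<longrightarrow> \<bar>u x - v x\<bar> \<le> C"
    by eventually_elim auto
qed

end
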